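(* Let $A\in\mathbb R^{n\times n}$ be symmetric with $A\not\succeq0$ and $b\in\mathbb R^n$. Then the trust region subproblem \[ ({\rm TRS})\quad \min_{x\in\mathbb R^n}\ x^TAx+2b^Tx\quad\text{s.t.}\quad \|x\|^2\le1 \] is equivalent to (in particular has the same optimal value as) the ball-constrained convex quadratic program \[ \min_{x\in\mathbb R^n}\ x^T(A-\lambda_{\min}(A)I_n)x+2b^Tx+\lambda_{\min}(A)\quad\text{s.t.}\quad \|x\|^2\le1. \]
   Context: $\lambda_{\min}(A)$ is the smallest eigenvalue of $A$; $I_n$ is the $n\times n$ identity; $\|\cdot\|$ is the Euclidean norm. *)

theory Defs
  imports "HOL-Analysis.Analysis"
begin

definition psd :: "real^'n^'n \<Rightarrow> bool" where
  "psd A \<longleftrightarrow> (\<forall>x. 0 \<le> x \<bullet> (A *v x))"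

definition lambda_min :: "real^'n^'n \<Rightarrow> real" where
  "lambda_min A = Min {c. \<exists>v. v \<noteq> 0 \<and> A *v v = c *\<^sub>R v}"

end

theory Submission
  imports Defs
begin

text \<open>Let \<open>l = \<lambda>\<^sub>m\<^sub>i\<^sub>n(A) < 0\<close> with unit eigenvector \<open>v\<close>, and \<open>f(x) = x\<^sup>TAx + 2b\<^sup>Tx\<close>.
  The convex objective equals \<open>f(x) + l (1 - \<parallel>x\<parallel>\<^sup>2)\<close>, which is at most \<open>f(x)\<close> on the ball.
  Conversely, walking from \<open>x\<close> along \<open>\<plusminus>v\<close> (sign chosen so that the linear term does not increase)
  until the unit sphere is reached adds exactly \<open>l (1 - \<parallel>x\<parallel>\<^sup>2)\<close> to the quadratic
  part, so some point of the ball has \<open>f\<close>-value at most the convex objective at \<open>x\<close>.\<close>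

lemma linear_coeff_zero_if_nonneg_quadratic:
  fixes p q :: real
  assumes "\<And>t. 0 \<le> t * p + t^2 * q"
  shows "p = 0"
proof (rule ccontr)
  assume "p \<noteq> 0"
  define t where "t = - p / (\<bar>q\<bar> + 1)"
  have "t^2 * q \<le> t^2 * \<bar>q\<bar>" by (simp add: mult_left_mono)
  also have "\<dots> < t^2 * (\<bar>q\<bar> + 1)"
    using \<open>p \<noteq> 0\<close> by (intro mult_strict_left_mono) (auto simp: t_def)
  also have "\<dots> = - (t * p)"
    by (simp add: t_def power2_eq_square divide_simps del: abs_mult_self_eq)
  finally show False using assms[of t] by linarith
qed

lemma inner_matrix_symmetric:
  fixes A :: "real^'n^'n"
  assumes "transpose A = A"
  shows "(A *v x) \<bullet> y = x \<bullet> (A *v y)"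
  by (metis assms dot_lmul_matrix vector_transpose_matrix)

lemma quadratic_form_diff_scaleR_mat_1:
  fixes A :: "real^'n^'n"
  shows "x \<bullet> ((A - c *\<^sub>R mat 1) *v x) = x \<bullet> (A *v x) - c * norm x ^ 2"
  by (simp add: matrix_vector_mult_diff_rdistrib scaleR_matrix_vector_assoc[symmetric]
      inner_diff_right power2_norm_eq_inner)

lemma psd_quadratic_form_eq_0_imp_kernel:
  fixes B :: "real^'n^'n"
  assumes "transpose B = B" and "psd B" and "u \<bullet> (B *v u) = 0"
  shows "B *v u = 0"
proof -
  let ?w = "B *v u"
  have "0 \<le> t * (2 * (?w \<bullet> ?w)) + t^2 * (?w \<bullet> (B *v ?w))" for t :: real
  proof -
    have "0 \<le> (u + t *\<^sub>R ?w) \<bullet> (B *v (u + t *\<^sub>R ?w))"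
      using \<open>psd B\<close> by (simp add: psd_def)
    also have "\<dots> = u \<bullet> ?w + t * (?w \<bullet> ?w) + t * (u \<bullet> (B *v ?w)) + t^2 * (?w \<bullet> (B *v ?w))"
      by (simp add: power2_eq_square algebra_simps)
    also have "u \<bullet> (B *v ?w) = ?w \<bullet> ?w"
      using inner_matrix_symmetric[OF assms(1), of u ?w] by simp
    finally show ?thesis using assms(3) by (simp add: algebra_simps)
  qed
  then have "2 * (?w \<bullet> ?w) = 0" by (rule linear_coeff_zero_if_nonneg_quadratic)
  then show ?thesis by simp
qed

text \<open>A minimiser of the Rayleigh quotient on the unit sphere is an eigenvector: for its value \<open>m\<close>,
  \<open>A - m I\<close> is positive semidefinite and vanishes as a quadratic form at the minimiser.\<close>

lemma symmetric_matrix_min_eigenpair: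
  fixes A :: "real^'n^'n"
  assumes "transpose A = A"
  obtains u m where "norm u = 1" and "A *v u = m *\<^sub>R u"
    and "\<And>y. m * norm y ^ 2 \<le> y \<bullet> (A *v y)"
proof -
  let ?S = "sphere (0::real^'n) 1"
  have "?S \<noteq> {}" by (simp add: sphere_def) (metis norm_Basis SOME_Basis)
  moreover have "continuous_on ?S (\<lambda>x. x \<bullet> (A *v x))"
    by (intro continuous_intros linear_continuous_on matrix_vector_mul_bounded_linear)
  ultimately obtain u where "u \<in> ?S" and umin: "\<And>y. y \<in> ?S \<Longrightarrow> u \<bullet> (A *v u) \<le> y \<bullet> (A *v y)"
    using continuous_attains_inf[OF compact_sphere] by blast
  then have u: "norm u = 1" by simp
  define m where "m = u \<bullet> (A *v u)"
  have bound: "m * norm y ^ 2 \<le> y \<bullet> (A *v y)" for y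
  proof (cases "y = 0")
    case False
    have "y /\<^sub>R norm y \<in> ?S" using False by simp
    then have "m \<le> (y /\<^sub>R norm y) \<bullet> (A *v (y /\<^sub>R norm y))"
      unfolding m_def by (rule umin)
    also have "\<dots> = (y \<bullet> (A *v y)) / norm y ^ 2"
      by (simp add: matrix_vector_mult_scaleR power2_eq_square field_simps)
    finally show ?thesis using False by (simp add: divide_simps)
  qed simp
  let ?B = "A - m *\<^sub>R mat 1"
  have "transpose ?B = ?B"
    using assms by (simp add: transpose_def vec_eq_iff mat_def)
  moreover have "psd ?B"
    using bound by (simp add: psd_def quadratic_form_diff_scaleR_mat_1)
  moreover have "u \<bullet> (?B *v u) = 0"
    using u by (simp add: quadratic_form_diff_scaleR_mat_1 m_def)
  ultimately have "?B *v u = 0" by (rule psd_quadratic_form_eq_0_imp_kernel)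
  then have "A *v u = m *\<^sub>R u"
    by (simp add: matrix_vector_mult_diff_rdistrib scaleR_matrix_vector_assoc[symmetric])
  with u bound that show ?thesis by blast
qed

lemma finite_eigenvalues_symmetric_matrix:
  fixes A :: "real^'n^'n"
  assumes "transpose A = A"
  shows "finite {c. \<exists>v. v \<noteq> 0 \<and> A *v v = c *\<^sub>R v}"
proof -
  let ?E = "{c. \<exists>v. v \<noteq> 0 \<and> A *v v = c *\<^sub>R v}"
  define V where "V c = (SOME v. v \<noteq> 0 \<and> A *v v = c *\<^sub>R v)" for c
  have V: "c \<in> ?E \<Longrightarrow> V c \<noteq> 0 \<and> A *v V c = c *\<^sub>R V c" for c
    unfolding V_def by (rule someI_ex) simp
  have orth: "V c \<bullet> V d = 0" if "c \<in> ?E" "d \<in> ?E" "c \<noteq> d" for c d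
  proof -
    have "c * (V c \<bullet> V d) = d * (V c \<bullet> V d)"
      using inner_matrix_symmetric[OF assms, of "V c" "V d"] V[OF that(1)] V[OF that(2)] by simp
    then show ?thesis using that(3) by simp
  qed
  have "inj_on V ?E"
  proof (rule inj_onI)
    fix c d assume "c \<in> ?E" "d \<in> ?E" "V c = V d"
    then show "c = d" using orth[of c d] V[of c] by auto
  qed
  moreover have "pairwise orthogonal (V ` ?E)"
    unfolding pairwise_def orthogonal_def using orth by fastforce
  then have "independent (V ` ?E)"
    by (rule pairwise_orthogonal_independent) (use V in fastforce)
  ultimately show ?thesis
    using independent_imp_finite finite_imageD by blast
qed

lemma lambda_min_symmetric_matrix:
  fixes A :: "real^'n^'n"
  assumes "transpose A = A"
  obtains v where "norm v = 1" and "A *v v = lambda_min A *\<^sub>R v"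
    and "\<And>y. lambda_min A * norm y ^ 2 \<le> y \<bullet> (A *v y)"
proof -
  obtain u m where u: "norm u = 1" "A *v u = m *\<^sub>R u"
    and bound: "\<And>y. m * norm y ^ 2 \<le> y \<bullet> (A *v y)"
    using symmetric_matrix_min_eigenpair[OF assms] by blast
  have "lambda_min A = m"
    unfolding lambda_min_def
  proof (rule Min_eqI[OF finite_eigenvalues_symmetric_matrix[OF assms]])
    fix c assume "c \<in> {c. \<exists>v. v \<noteq> 0 \<and> A *v v = c *\<^sub>R v}"
    then obtain w where "w \<noteq> 0" "A *v w = c *\<^sub>R w" by blast
    with bound[of w] show "m \<le> c" by (simp add: power2_norm_eq_inner)
  next
    show "m \<in> {c. \<exists>v. v \<noteq> 0 \<and> A *v v = c *\<^sub>R v}"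
      using u by (auto intro!: exI[of _ u])
  qed
  with u bound that show ?thesis by blast
qed

lemma lambda_min_neg_if_not_psd:
  fixes A :: "real^'n^'n"
  assumes "transpose A = A" and "\<not> psd A"
  shows "lambda_min A < 0"
proof -
  obtain x where "x \<bullet> (A *v x) < 0" using assms(2) by (auto simp: psd_def not_le)
  moreover have "\<And>y. lambda_min A * norm y ^ 2 \<le> y \<bullet> (A *v y)"
    using lambda_min_symmetric_matrix[OF assms(1)] by blast
  ultimately have "lambda_min A * norm x ^ 2 < 0" by (meson le_less_trans)
  then show ?thesis by (simp add: mult_less_0_iff)
qed

lemma exists_nonneg_step_to_unit_sphere:
  fixes x w :: "'a::real_normed_vector"
  assumes "norm w = 1" and "norm x \<le> 1"
  obtains t where "0 \<le> t" and "norm (x + t *\<^sub>R w) = 1"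
proof -
  have "1 \<le> norm (x + 2 *\<^sub>R w)"
    using norm_triangle_ineq2[of "2 *\<^sub>R w" "- x"] assms by (simp add: add.commute)
  moreover have "\<forall>t. isCont (\<lambda>t. norm (x + t *\<^sub>R w)) t" by (intro allI continuous_intros)
  ultimately show ?thesis
    using IVT[of "\<lambda>t. norm (x + t *\<^sub>R w)" 0 1 2] assms that by auto
qed

lemma quadratic_descent_along_eigenvector:
  fixes A :: "real^'n^'n" and b x v :: "real^'n"
  assumes "transpose A = A" and "A *v v = l *\<^sub>R v" and "norm v = 1" and "norm x \<le> 1"
  obtains y where "norm y = 1"
    and "y \<bullet> (A *v y) + 2 * (b \<bullet> y) \<le> x \<bullet> (A *v x) + 2 * (b \<bullet> x) + l * (1 - norm x ^ 2)"
proof -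
  define w where "w = (if b \<bullet> v \<le> 0 then 1 else - 1 :: real) *\<^sub>R v"
  have w: "norm w = 1" "A *v w = l *\<^sub>R w" "b \<bullet> w \<le> 0"
    using assms(2,3) by (auto simp: w_def matrix_vector_mult_scaleR)
  obtain t where "0 \<le> t" and y: "norm (x + t *\<^sub>R w) = 1"
    using exists_nonneg_step_to_unit_sphere[OF w(1) assms(4)] .
  have ww: "w \<bullet> w = 1" using w(1) by (simp add: norm_eq_1)
  define a where "a = x \<bullet> w"
  have "w \<bullet> (A *v x) = l * a"
    using inner_matrix_symmetric[OF assms(1), of w x] w(2) by (simp add: a_def inner_commute)
  then have "(x + t *\<^sub>R w) \<bullet> (A *v (x + t *\<^sub>R w)) + 2 * (b \<bullet> (x + t *\<^sub>R w))
      = x \<bullet> (A *v x) + 2 * (b \<bullet> x) + l * (2 * t * a + t^2) + 2 * t * (b \<bullet> w)"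
    using w(2) ww by (simp add: a_def inner_commute power2_eq_square algebra_simps)
  also have "2 * t * a + t^2 = 1 - norm x ^ 2"
    using y ww unfolding norm_eq_1 power2_norm_eq_inner
    by (simp add: a_def inner_commute power2_eq_square algebra_simps)
  also have "2 * t * (b \<bullet> w) \<le> 0"
    using \<open>0 \<le> t\<close> w(3) by (simp add: mult_nonneg_nonpos)
  finally show ?thesis using y that by auto
qed

lemma cINF_eq_cINF_if_mutually_dominated:
  fixes f g :: "'a \<Rightarrow> 'b::conditionally_complete_lattice"
  assumes "K \<noteq> {}" and "bdd_below (f ` K)" and "bdd_below (g ` K)"
    and "\<And>x. x \<in> K \<Longrightarrow> \<exists>y\<in>K. f y \<le> g x" and "\<And>x. x \<in> K \<Longrightarrow> \<exists>y\<in>K. g y \<le> f x"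
  shows "(INF x\<in>K. f x) = (INF x\<in>K. g x)"
  using assms by (intro antisym cINF_mono) auto

lemma bdd_below_continuous_on_cball:
  fixes f :: "'a::euclidean_space \<Rightarrow> real"
  assumes "continuous_on (cball c r) f"
  shows "bdd_below (f ` cball c r)"
  by (intro bounded_imp_bdd_below compact_imp_bounded compact_continuous_image assms compact_cball)

theorem corollary1:
  fixes A :: "real^'n^'n" and b :: "real^'n"
  assumes "transpose A = A" and "\<not> psd A"
  shows "(INF x\<in>{x. norm x ^ 2 \<le> 1}. x \<bullet> (A *v x) + 2 * (b \<bullet> x))
       = (INF x\<in>{x. norm x ^ 2 \<le> 1}.
            x \<bullet> ((A - lambda_min A *\<^sub>R mat 1) *v x) + 2 * (b \<bullet> x) + lambda_min A)"
proof -
  define l where "l = lambda_min A"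
  obtain v where v: "norm v = 1" "A *v v = l *\<^sub>R v"
    using lambda_min_symmetric_matrix[OF assms(1)] unfolding l_def by blast
  have "l < 0" unfolding l_def by (rule lambda_min_neg_if_not_psd[OF assms])
  have ball: "{x::real^'n. norm x ^ 2 \<le> 1} = cball 0 1"
    by (auto simp: power_le_one_iff abs_square_le_1)
  have shift: "x \<bullet> ((A - l *\<^sub>R mat 1) *v x) + 2 * (b \<bullet> x) + l
      = x \<bullet> (A *v x) + 2 * (b \<bullet> x) + l * (1 - norm x ^ 2)" for x
    unfolding quadratic_form_diff_scaleR_mat_1 by (simp add: algebra_simps)
  show ?thesis
    unfolding ball l_def[symmetric] shift
  proof (rule cINF_eq_cINF_if_mutually_dominated)
    fix x :: "real^'n" assume "x \<in> cball 0 1"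
    then obtain y where "norm y = 1" and "y \<bullet> (A *v y) + 2 * (b \<bullet> y)
        \<le> x \<bullet> (A *v x) + 2 * (b \<bullet> x) + l * (1 - norm x ^ 2)"
      using quadratic_descent_along_eigenvector[OF assms(1) v(2,1)] by auto
    then show "\<exists>y\<in>cball 0 1. y \<bullet> (A *v y) + 2 * (b \<bullet> y)
        \<le> x \<bullet> (A *v x) + 2 * (b \<bullet> x) + l * (1 - norm x ^ 2)" by auto
  next
    fix x :: "real^'n" assume "x \<in> cball 0 1"
    then have "l * (1 - norm x ^ 2) \<le> 0"
      using \<open>l < 0\<close> by (simp add: mult_nonpos_nonneg power_le_one)
    then show "\<exists>y\<in>cball 0 1. y \<bullet> (A *v y) + 2 * (b \<bullet> y) + l * (1 - norm y ^ 2)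
        \<le> x \<bullet> (A *v x) + 2 * (b \<bullet> x)" using \<open>x \<in> cball 0 1\<close> by force
  qed (simp, (intro bdd_below_continuous_on_cball continuous_intros linear_continuous_on
      matrix_vector_mul_bounded_linear)+)
qed

end
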